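(* For any disjoint nonempty sets $T,B\subseteq[d]$, the function $\theta\mapsto\log\mathbb{P}_\theta(B\prec T)$ is concave on $\mathbb{R}^d$. Consequently, the order-$M$ rank-breaking log-likelihood $\mathcal{L}_{\rm RB}(\theta)=\sum_{j=1}^n\sum_{a=1}^{\ell_j}\log\mathbb{P}_\theta(e_{j,a})$ is concave in $\theta\in\mathbb{R}^d$ for any collection of edges $e_{j,a}$.
   Context: PL model: items $[d]$, parameter $\theta\in\mathbb{R}^d$; when a set $S$ is offered, a ranking $\sigma:[|S|]\to S$ (position 1 most preferred) is drawn with probability $\prod_{i=1}^{|S|-1}e^{\theta_{\sigma(i)}}/\sum_{i'=i}^{|S|}e^{\theta_{\sigma(i')}}$. For disjoint nonempty $T,B\subseteq[d]$, $\mathbb{P}_\theta(B\prec T)=\sum_{\sigma}\prod_{u=1}^{|T|}\frac{e^{\theta_{\sigma(u)}}}{\sum_{c=u}^{|T|}e^{\theta_{\sigma(c)}}+\sum_{i\in B}e^{\theta_i}}$ (sum over all orderings $\sigma$ of $T$), the PL probability that, when $T\cup B$ is offered, every item of $T$ is ranked above every item of $B$. An edge $e_{j,a}$ is such a pair $(B,T)$ and $\mathbb{P}_\theta(e_{j,a})=\mathbb{P}_\theta(B\prec T)$. *)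

theory Defs
  imports "HOL-Analysis.Analysis" "HOL-Combinatorics.Multiset_Permutations"
begin

text \<open>Items [d] are modelled by a finite type 'd; theta :: real^'d.
  An ordering sigma of T is a distinct list enumerating T (position u = index u, 0-based).
  PL_before theta B T is the PL probability that every item of T is ranked above every item of B.\<close>

definition PL_before :: "real^'d \<Rightarrow> 'd set \<Rightarrow> 'd set \<Rightarrow> real" where
  "PL_before \<theta> B T =
     (\<Sum>\<sigma>\<in>permutations_of_set T.
        \<Prod>u<length \<sigma>. exp (\<theta> $ (\<sigma> ! u)) /
          ((\<Sum>c\<in>{u..<length \<sigma>}. exp (\<theta> $ (\<sigma> ! c))) + (\<Sum>i\<in>B. exp (\<theta> $ i))))"

definition PL_edge :: "real^'d \<Rightarrow> 'd set \<times> 'd set \<Rightarrow> real" where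
  "PL_edge \<theta> e = PL_before \<theta> (fst e) (snd e)"

definition L_RB :: "nat \<Rightarrow> (nat \<Rightarrow> nat) \<Rightarrow> (nat \<Rightarrow> nat \<Rightarrow> 'd set \<times> 'd set) \<Rightarrow> real^'d \<Rightarrow> real" where
  "L_RB n ell e \<theta> = (\<Sum>j=1..n. \<Sum>a=1..ell j. ln (PL_edge \<theta> (e j a)))"

end

theory Submission
  imports Defs
begin

text \<open>
  Give item \<open>i\<close> an exponential clock of rate \<open>e^\<theta>\<^sub>i\<close> and write \<open>W\<^sub>A = \<Sum>\<^sub>i\<^sub>\<in>\<^sub>A e^\<theta>\<^sub>i\<close>.
  Then \<open>P\<^sub>\<theta>(B \<prec> T)\<close> is the probability that all clocks of \<open>T\<close> ring before the first clock
  of \<open>B\<close>; conditioning on that first ring and substituting its time by \<open>e^s / W\<^sub>B\<close> gives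
    \<open>P\<^sub>\<theta>(B \<prec> T) = \<integral> exp (s - e^s) \<Prod>\<^sub>i\<^sub>\<in>\<^sub>T (1 - exp (- e^(\<theta>\<^sub>i - ln W\<^sub>B + s))) ds\<close>.
  The identity holds because expanding the product gives an alternating sum over subsets of
  \<open>T\<close> that satisfies the same first-choice recursion as the PL probability.
  Since \<open>\<theta> \<mapsto> ln W\<^sub>B\<close> is convex and \<open>z \<mapsto> ln (1 - exp (- e^z))\<close> is concave and increasing,
  the integrand is log-concave jointly in \<open>(\<theta>, s)\<close>, so by the one-dimensional
  Prekopa-Leindler inequality its integral over \<open>s\<close> is log-concave in \<open>\<theta>\<close>.
\<close>

section \<open>The alternating-sum formula\<close>

definition weight :: "real^'d \<Rightarrow> 'd set \<Rightarrow> real" where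
  "weight \<theta> A = (\<Sum>i\<in>A. exp (\<theta> $ i))"

lemma weight_nonneg: "0 \<le> weight \<theta> A"
  unfolding weight_def by (simp add: sum_nonneg)

lemma weight_pos: "finite A \<Longrightarrow> A \<noteq> {} \<Longrightarrow> 0 < weight \<theta> A"
  unfolding weight_def by (simp add: sum_pos)

lemma sum_nth_distinct:
  "distinct xs \<Longrightarrow> (\<Sum>c\<in>{0..<length xs}. f (xs ! c)) = sum f (set xs)"
  by (simp add: sum.distinct_set_conv_list sum_list_sum_nth)

lemma PL_before_first_choice:
  fixes \<theta> :: "real^'d"
  assumes "finite T" "T \<noteq> {}"
  shows "PL_before \<theta> B T =
    (\<Sum>x\<in>T. exp (\<theta> $ x) / (weight \<theta> T + weight \<theta> B) * PL_before \<theta> B (T - {x}))"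
proof -
  define g where "g \<sigma> = (\<Prod>u<length \<sigma>. exp (\<theta> $ (\<sigma> ! u)) /
          ((\<Sum>c\<in>{u..<length \<sigma>}. exp (\<theta> $ (\<sigma> ! c))) + weight \<theta> B))" for \<sigma> :: "'d list"
  have PL_g: "PL_before \<theta> B A = sum g (permutations_of_set A)" for A
    unfolding PL_before_def g_def weight_def ..
  have g_Cons: "g (x # \<sigma>) = exp (\<theta> $ x) / (weight \<theta> T + weight \<theta> B) * g \<sigma>"
    if "\<sigma> \<in> permutations_of_set (T - {x})" "x \<in> T" for x \<sigma>
  proof -
    have "distinct (x # \<sigma>)" "set (x # \<sigma>) = T"
      using that by (auto simp: permutations_of_set_def)
    then have total: "(\<Sum>c\<in>{0..<length (x # \<sigma>)}. exp (\<theta> $ ((x # \<sigma>) ! c))) = weight \<theta> T"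
      unfolding weight_def by (subst sum_nth_distinct) auto
    have tail: "(\<Sum>c\<in>{Suc u..<length (x # \<sigma>)}. exp (\<theta> $ ((x # \<sigma>) ! c)))
        = (\<Sum>c\<in>{u..<length \<sigma>}. exp (\<theta> $ (\<sigma> ! c)))" for u
      by (simp add: sum.shift_bounds_Suc_ivl del: sum.op_ivl_Suc)
    have "g (x # \<sigma>) = exp (\<theta> $ ((x # \<sigma>) ! 0)) /
          ((\<Sum>c\<in>{0..<length (x # \<sigma>)}. exp (\<theta> $ ((x # \<sigma>) ! c))) + weight \<theta> B)
        * (\<Prod>u<length \<sigma>. exp (\<theta> $ ((x # \<sigma>) ! Suc u)) /
          ((\<Sum>c\<in>{Suc u..<length (x # \<sigma>)}. exp (\<theta> $ ((x # \<sigma>) ! c))) + weight \<theta> B))"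
      unfolding g_def by (simp only: length_Cons prod.lessThan_Suc_shift)
    then show ?thesis
      unfolding total tail g_def by simp
  qed
  have "sum g (permutations_of_set T) =
      (\<Sum>x\<in>T. sum g ((#) x ` permutations_of_set (T - {x})))"
    unfolding permutations_of_set_nonempty[OF assms(2)]
    by (rule sum.UNION_disjoint) (use assms in auto)
  also have "\<dots> = (\<Sum>x\<in>T. \<Sum>\<sigma>\<in>permutations_of_set (T - {x}). g (x # \<sigma>))"
    by (intro sum.cong refl sum.reindex_cong[of "(#) _"]) (auto intro: inj_onI)
  also have "\<dots> = (\<Sum>x\<in>T. exp (\<theta> $ x) / (weight \<theta> T + weight \<theta> B) *
      sum g (permutations_of_set (T - {x})))"
    by (rule sum.cong[OF refl]) (simp add: g_Cons sum_distrib_left)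
  finally show ?thesis by (simp add: PL_g)
qed

lemma sum_Pow_minus_one_power:
  assumes "finite A" "A \<noteq> {}"
  shows "(\<Sum>S\<in>Pow A. (-1) ^ card S) = (0 :: 'a :: comm_ring_1)"
proof -
  have "0 < card A"
    using assms by (simp add: card_gt_0_iff)
  then show ?thesis
    using prod_diff_conv_sum[OF assms(1), of "\<lambda>_. 1::'a" "\<lambda>_. 1"] by (simp add: power_0_left)
qed

definition PL_alternating :: "real^'d \<Rightarrow> 'd set \<Rightarrow> 'd set \<Rightarrow> real" where
  "PL_alternating \<theta> B T =
     (\<Sum>S\<in>Pow T. (-1) ^ card S * (weight \<theta> B / (weight \<theta> B + weight \<theta> S)))"

lemma PL_alternating_first_choice:
  fixes \<theta> :: "real^'d"
  assumes T: "finite T" "T \<noteq> {}" and B: "0 < weight \<theta> B"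
  shows "PL_alternating \<theta> B T =
    (\<Sum>x\<in>T. exp (\<theta> $ x) / (weight \<theta> T + weight \<theta> B) * PL_alternating \<theta> B (T - {x}))"
proof -
  define f where "f S = (-1) ^ card S * (weight \<theta> B / (weight \<theta> B + weight \<theta> S))" for S
  have alternating_eq: "PL_alternating \<theta> B A = sum f (Pow A)" for A
    unfolding PL_alternating_def f_def ..
  have f_weight: "f S * (weight \<theta> B + weight \<theta> S) = (-1) ^ card S * weight \<theta> B" for S
    using B weight_nonneg[of \<theta> S] unfolding f_def by simp
  have "(\<Sum>x\<in>T. exp (\<theta> $ x) * PL_alternating \<theta> B (T - {x}))
      = (\<Sum>x\<in>T. \<Sum>S\<in>{S\<in>Pow T. x \<notin> S}. exp (\<theta> $ x) * f S)"
    unfolding alternating_eq sum_distrib_left by (intro sum.cong refl) (auto simp: Pow_def)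
  also have "\<dots> = (\<Sum>S\<in>Pow T. \<Sum>x\<in>T - S. exp (\<theta> $ x) * f S)"
    by (subst sum.swap_restrict) (use T in \<open>auto intro!: sum.cong\<close>)
  also have "\<dots> = (\<Sum>S\<in>Pow T. f S * (weight \<theta> T - weight \<theta> S))"
    unfolding weight_def using T(1)
    by (intro sum.cong refl) (auto simp: sum_diff right_diff_distrib sum_distrib_left mult.commute)
  also have "\<dots> = (weight \<theta> T + weight \<theta> B) * PL_alternating \<theta> B T
      - (\<Sum>S\<in>Pow T. (-1) ^ card S) * weight \<theta> B"
    unfolding alternating_eq sum_distrib_left sum_distrib_right f_weight[symmetric] sum_subtractf[symmetric]
    by (intro sum.cong refl) (simp add: algebra_simps)
  finally have "(weight \<theta> T + weight \<theta> B) * PL_alternating \<theta> B T =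
      (\<Sum>x\<in>T. exp (\<theta> $ x) * PL_alternating \<theta> B (T - {x}))"
    using sum_Pow_minus_one_power[OF T, where 'a=real] by simp
  moreover have "0 < weight \<theta> T + weight \<theta> B"
    using B weight_nonneg[of \<theta> T] by linarith
  ultimately show ?thesis
    by (simp add: sum_divide_distrib[symmetric] field_simps)
qed

lemma PL_before_eq_alternating:
  fixes \<theta> :: "real^'d"
  assumes "finite T" and B: "0 < weight \<theta> B"
  shows "PL_before \<theta> B T = PL_alternating \<theta> B T"
  using assms(1)
proof (induction T rule: finite_psubset_induct)
  case (psubset T)
  show ?case
  proof (cases "T = {}")
    case True
    then show ?thesis
      using B by (simp add: PL_before_def PL_alternating_def weight_def)
  next
    case False
    have "PL_before \<theta> B T =
        (\<Sum>x\<in>T. exp (\<theta> $ x) / (weight \<theta> T + weight \<theta> B) * PL_before \<theta> B (T - {x}))"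
      by (rule PL_before_first_choice[OF psubset.hyps False])
    also have "\<dots> =
        (\<Sum>x\<in>T. exp (\<theta> $ x) / (weight \<theta> T + weight \<theta> B) * PL_alternating \<theta> B (T - {x}))"
      using psubset.IH by (intro sum.cong refl) auto
    also have "\<dots> = PL_alternating \<theta> B T"
      by (rule PL_alternating_first_choice[symmetric, OF psubset.hyps False B])
    finally show ?thesis .
  qed
qed

section \<open>An integral representation\<close>

lemma integral_exp_minus_scaled_exp:
  fixes c :: real
  assumes c: "0 < c"
  shows "integrable lborel (\<lambda>s. exp (s - c * exp s))"
    and "integral\<^sup>L lborel (\<lambda>s. exp (s - c * exp s)) = 1 / c"
proof -
  define F where "F s = - exp (- (c * exp s)) / c" for s
  have F_deriv: "DERIV F s :> exp (s - c * exp s)" for s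
  proof -
    have "DERIV F s :> - (exp (- (c * exp s)) * (- (c * exp s))) / c"
      unfolding F_def by (auto intro!: derivative_eq_intros)
    moreover have "- (exp (- (c * exp s)) * (- (c * exp s))) / c = exp (s - c * exp s)"
      using c by (simp add: exp_diff exp_minus field_simps)
    ultimately show ?thesis by simp
  qed
  have "(F \<longlongrightarrow> - exp (- (c * 0)) / c) at_bot"
    unfolding F_def by (intro tendsto_intros exp_at_bot) (use c in auto)
  then have F_bot: "((F \<circ> real_of_ereal) \<longlongrightarrow> - 1 / c) (at_right (-\<infinity>))"
    unfolding at_right_MInf tendsto_compose_filtermap by (simp add: filtermap_filtermap)
  have "filterlim (\<lambda>s. c * exp s) at_top at_top"
    by (rule filterlim_tendsto_pos_mult_at_top[OF tendsto_const c exp_at_top])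
  then have "filterlim (\<lambda>s. - (c * exp s)) at_bot at_top"
    by (simp add: filterlim_uminus_at_top)
  then have "((\<lambda>s. exp (- (c * exp s))) \<longlongrightarrow> 0) at_top"
    by (rule filterlim_compose[OF exp_at_bot])
  then have "(F \<longlongrightarrow> - 0 / c) at_top"
    unfolding F_def by (intro tendsto_divide tendsto_minus tendsto_const) (use c in auto)
  then have F_top: "((F \<circ> real_of_ereal) \<longlongrightarrow> 0) (at_left \<infinity>)"
    unfolding at_left_PInf tendsto_compose_filtermap by (simp add: filtermap_filtermap)
  note FTC = interval_integral_FTC_nonneg[of "-\<infinity>" "\<infinity>" F "\<lambda>s. exp (s - c * exp s)" "-1/c" 0]
  have "set_integrable lborel (einterval (-\<infinity>) \<infinity>) (\<lambda>s. exp (s - c * exp s))"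
    and "(LBINT s=-\<infinity>..\<infinity>. exp (s - c * exp s)) = 0 - (-1/c)"
    by (rule FTC; use F_deriv F_bot F_top in \<open>auto intro!: continuous_intros\<close>)+
  then show "integrable lborel (\<lambda>s. exp (s - c * exp s))"
    and "integral\<^sup>L lborel (\<lambda>s. exp (s - c * exp s)) = 1 / c"
    by (simp_all add: set_integrable_def interval_lebesgue_integral_def set_lebesgue_integral_def)
qed

definition PL_density :: "real^'d \<Rightarrow> 'd set \<Rightarrow> 'd set \<Rightarrow> real \<Rightarrow> real" where
  "PL_density \<theta> B T s =
     exp (s - exp s) * (\<Prod>i\<in>T. 1 - exp (- (exp (\<theta> $ i) / weight \<theta> B * exp s)))"

lemma PL_density_alternating:
  fixes \<theta> :: "real^'d"
  assumes "finite T"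
  shows "PL_density \<theta> B T s =
    (\<Sum>S\<in>Pow T. (-1) ^ card S * exp (s - (1 + weight \<theta> S / weight \<theta> B) * exp s))"
proof -
  have "(\<Prod>i\<in>S. exp (- (exp (\<theta> $ i) / weight \<theta> B * exp s)))
      = exp (- (weight \<theta> S / weight \<theta> B * exp s))" if "S \<subseteq> T" for S
    using finite_subset[OF that assms]
    by (simp add: exp_sum weight_def sum_negf[symmetric] sum_distrib_right sum_divide_distrib)
  moreover have "exp (s - exp s) * exp (- (weight \<theta> S / weight \<theta> B * exp s))
      = exp (s - (1 + weight \<theta> S / weight \<theta> B) * exp s)" for S
    by (simp add: exp_add[symmetric] algebra_simps)
  ultimately show ?thesis
    unfolding PL_density_def prod_diff_conv_sum[OF assms] sum_distrib_left
    by (intro sum.cong refl) (simp add: algebra_simps)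
qed

lemma
  fixes \<theta> :: "real^'d"
  assumes T: "finite T" and B: "0 < weight \<theta> B"
  shows integrable_PL_density: "integrable lborel (PL_density \<theta> B T)"
    and integral_PL_density: "integral\<^sup>L lborel (PL_density \<theta> B T) = PL_before \<theta> B T"
proof -
  have c: "0 < 1 + weight \<theta> S / weight \<theta> B" for S
    using B weight_nonneg[of \<theta> S] by (simp add: add_pos_nonneg)
  note density = PL_density_alternating[OF T, abs_def]
  note integral = integral_exp_minus_scaled_exp[OF c]
  show "integrable lborel (PL_density \<theta> B T)"
    unfolding density using integral(1) by (auto intro: Bochner_Integration.integrable_sum)
  have "integral\<^sup>L lborel (PL_density \<theta> B T)
      = (\<Sum>S\<in>Pow T. (-1) ^ card S * (1 / (1 + weight \<theta> S / weight \<theta> B)))"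
    unfolding density using integral by (subst Bochner_Integration.integral_sum) auto
  also have "\<dots> = PL_alternating \<theta> B T"
    unfolding PL_alternating_def using B by (intro sum.cong refl) (simp add: field_simps)
  finally show "integral\<^sup>L lborel (PL_density \<theta> B T) = PL_before \<theta> B T"
    using PL_before_eq_alternating[OF T B] by simp
qed

section \<open>The one-dimensional Prekopa-Leindler inequality\<close>

lemma bounded_interval_of_finite_measure:
  fixes S :: "real set"
  assumes S: "is_interval S" and finite: "emeasure lborel S < \<infinity>"
  shows "bounded S"
proof (rule ccontr)
  assume unbounded: "\<not> bounded S"
  then obtain a where a: "a \<in> S"
    by (metis bounded_empty equals0I)
  have "\<not> (\<forall>x\<in>S. \<bar>x\<bar> \<le> \<bar>a\<bar> + measure lborel S)"
    using unbounded unfolding bounded_real by blast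
  then obtain s where s: "s \<in> S" "\<bar>a\<bar> + measure lborel S < \<bar>s\<bar>"
    by (auto simp: not_le)
  have "{min a s..max a s} \<subseteq> S"
  proof
    fix x assume "x \<in> {min a s..max a s}"
    then show "x \<in> S"
      using mem_is_interval_1_I[OF S a s(1)] mem_is_interval_1_I[OF S s(1) a]
      by (cases "a \<le> s") simp_all
  qed
  then have "emeasure lborel {min a s..max a s} \<le> emeasure lborel S"
    using real_interval_borel_measurable[OF S] by (intro emeasure_mono) simp_all
  also have "\<dots> = ennreal (measure lborel S)"
    using finite by (simp add: emeasure_eq_ennreal_measure)
  finally have "max a s - min a s \<le> measure lborel S"
    by (simp add: ennreal_le_iff)
  then show False
    using s(2) by linarith
qed

lemma interval_Inf_Sup_subset:
  fixes S :: "real set"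
  assumes S: "is_interval S" "bounded S" "S \<noteq> {}"
  shows "{Inf S<..<Sup S} \<subseteq> S" and "S \<subseteq> {Inf S..Sup S}"
proof -
  have bdd: "bdd_above S" "bdd_below S"
    using S(2) by (simp_all add: bounded_imp_bdd_above bounded_imp_bdd_below)
  show "{Inf S<..<Sup S} \<subseteq> S"
  proof
    fix y assume y: "y \<in> {Inf S<..<Sup S}"
    obtain s t where "s \<in> S" "s < y" "t \<in> S" "y < t"
      using y cInf_less_iff[OF S(3) bdd(2)] less_cSup_iff[OF S(3) bdd(1)] by auto
    then show "y \<in> S"
      using S(1) unfolding is_interval_1 by (meson less_imp_le)
  qed
  show "S \<subseteq> {Inf S..Sup S}"
    using bdd by (auto intro: cInf_lower cSup_upper)
qed

lemma emeasure_bounded_interval: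
  fixes S :: "real set"
  assumes S: "is_interval S" "bounded S" "S \<noteq> {}"
  shows "emeasure lborel S = ennreal (Sup S - Inf S)"
proof -
  have "Inf S \<le> Sup S"
    using interval_Inf_Sup_subset(2)[OF S] S(3) by auto
  then show ?thesis
    using emeasure_mono[OF interval_Inf_Sup_subset(1)[OF S], of lborel]
      emeasure_mono[OF interval_Inf_Sup_subset(2)[OF S], of lborel]
    using real_interval_borel_measurable[OF S(1)] by (simp add: antisym)
qed

lemma interval_Inf_Sup_combination_mem:
  fixes S :: "real set"
  assumes S: "is_interval S" "bounded S" "S \<noteq> {}" and t: "0 < t" "t < 1"
  shows "Inf S + t * (Sup S - Inf S) \<in> S"
proof (cases "Inf S < Sup S")
  case True
  have "0 < t * (Sup S - Inf S)" "t * (Sup S - Inf S) < Sup S - Inf S"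
    using True t mult_strict_right_mono[of t 1 "Sup S - Inf S"] by simp_all
  then have "Inf S + t * (Sup S - Inf S) \<in> {Inf S<..<Sup S}"
    by simp
  then show ?thesis
    using interval_Inf_Sup_subset(1)[OF S] by blast
next
  case False
  have "x = Inf S" if "x \<in> S" for x
    using subsetD[OF interval_Inf_Sup_subset(2)[OF S] that] False by auto
  then have "Sup S = Inf S" "Inf S \<in> S"
    using False S(3) interval_Inf_Sup_subset(2)[OF S] by fastforce+
  then show ?thesis
    by simp
qed

lemma brunn_minkowski_interval:
  fixes A B C :: "real set" and lam :: real
  assumes lam: "0 \<le> lam" "lam \<le> 1"
    and A: "is_interval A" "bounded A" "A \<noteq> {}"
    and B: "is_interval B" "bounded B" "B \<noteq> {}"
    and C: "C \<in> sets lborel"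
    and combination: "\<And>s t. s \<in> A \<Longrightarrow> t \<in> B \<Longrightarrow> (1 - lam) * s + lam * t \<in> C"
  shows "ennreal (1 - lam) * emeasure lborel A + ennreal lam * emeasure lborel B
    \<le> emeasure lborel C"
proof -
  define lo where "lo = (1 - lam) * Inf A + lam * Inf B"
  define D where "D = (1 - lam) * (Sup A - Inf A) + lam * (Sup B - Inf B)"
  have ordered: "Inf A \<le> Sup A" "Inf B \<le> Sup B"
    using interval_Inf_Sup_subset(2)[OF A] interval_Inf_Sup_subset(2)[OF B] A(3) B(3)
    by auto
  have "{lo<..<lo + D} \<subseteq> C"
  proof
    fix y assume y: "y \<in> {lo<..<lo + D}"
    define t where "t = (y - lo) / D"
    have t: "0 < t" "t < 1"
      using y unfolding t_def by (auto simp: field_simps)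
    have "(1 - lam) * (Inf A + t * (Sup A - Inf A)) + lam * (Inf B + t * (Sup B - Inf B)) = lo + t * D"
      unfolding lo_def D_def by (simp add: algebra_simps)
    also have "\<dots> = y"
      using y unfolding t_def by simp
    finally have "(1 - lam) * (Inf A + t * (Sup A - Inf A)) + lam * (Inf B + t * (Sup B - Inf B)) = y" .
    then show "y \<in> C"
      using combination[OF interval_Inf_Sup_combination_mem[OF A t]
          interval_Inf_Sup_combination_mem[OF B t]] by simp
  qed
  moreover have "0 \<le> D"
    unfolding D_def using lam ordered by simp
  ultimately have "ennreal D \<le> emeasure lborel C"
    using emeasure_mono[OF _ C, of "{lo<..<lo + D}"] by simp
  moreover have "ennreal D = ennreal (1 - lam) * ennreal (Sup A - Inf A) + ennreal lam * ennreal (Sup B - Inf B)"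
    unfolding D_def using lam ordered by (simp add: ennreal_plus ennreal_mult)
  ultimately show ?thesis
    using emeasure_bounded_interval[OF A] emeasure_bounded_interval[OF B] by simp
qed

lemma borel_measurable_emeasure_superlevel:
  fixes f :: "real \<Rightarrow> real"
  assumes [measurable]: "f \<in> borel_measurable lborel"
  shows "(\<lambda>c. emeasure lborel {x. c < f x}) \<in> borel_measurable lborel"
proof -
  have "emeasure lborel {x. c < f x} = (\<integral>\<^sup>+x. indicator {p. snd p < f (fst p)} (x, c) \<partial>lborel)" for c
  proof -
    have "emeasure lborel {x. c < f x} = (\<integral>\<^sup>+x. indicator {x. c < f x} x \<partial>lborel)"
      by simp
    then show ?thesis
      by (simp add: indicator_def)
  qed
  moreover have "(\<lambda>(c, x). indicator {p::real \<times> real. snd p < f (fst p)} (x, c) :: ennreal)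
      \<in> borel_measurable (lborel \<Otimes>\<^sub>M lborel)"
    by measurable
  ultimately show ?thesis
    using lborel.borel_measurable_nn_integral by simp
qed

lemma nn_integral_layer_cake:
  fixes f :: "real \<Rightarrow> real"
  assumes [measurable]: "f \<in> borel_measurable lborel" and nonneg: "\<And>x. 0 \<le> f x"
  shows "(\<integral>\<^sup>+x. f x \<partial>lborel) = (\<integral>\<^sup>+c. emeasure lborel {x. c < f x} * indicator {0<..} c \<partial>lborel)"
proof -
  define F where "F x c = (indicator {p::real \<times> real. 0 < snd p \<and> snd p < f (fst p)} (x, c) :: ennreal)"
    for x c
  have F_measurable: "case_prod F \<in> borel_measurable (lborel \<Otimes>\<^sub>M lborel)"
    unfolding F_def by measurable
  have "ennreal (f x) = (\<integral>\<^sup>+c. F x c \<partial>lborel)" for x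
  proof -
    have "(\<integral>\<^sup>+c. F x c \<partial>lborel) = (\<integral>\<^sup>+c. indicator {0<..<f x} c \<partial>lborel)"
      unfolding F_def by (intro nn_integral_cong) (auto split: split_indicator)
    then show ?thesis
      using nonneg[of x] by simp
  qed
  then have "(\<integral>\<^sup>+x. f x \<partial>lborel) = (\<integral>\<^sup>+x. (\<integral>\<^sup>+c. F x c \<partial>lborel) \<partial>lborel)"
    by simp
  also have "\<dots> = (\<integral>\<^sup>+c. (\<integral>\<^sup>+x. F x c \<partial>lborel) \<partial>lborel)"
    by (rule lborel_pair.Fubini'[OF F_measurable, symmetric])
  also have "\<dots> = (\<integral>\<^sup>+c. (\<integral>\<^sup>+x. indicator {x. c < f x} x * indicator {0<..} c \<partial>lborel) \<partial>lborel)"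
    unfolding F_def by (intro nn_integral_cong) (auto split: split_indicator)
  also have "\<dots> = (\<integral>\<^sup>+c. emeasure lborel {x. c < f x} * indicator {0<..} c \<partial>lborel)"
    by (simp add: nn_integral_multc)
  finally show ?thesis .
qed

lemma emeasure_superlevel_finite:
  fixes f :: "real \<Rightarrow> real"
  assumes [measurable]: "f \<in> borel_measurable lborel"
    and finite: "(\<integral>\<^sup>+x. f x \<partial>lborel) < \<infinity>" and c: "0 < c"
  shows "emeasure lborel {x. c < f x} < \<infinity>"
proof -
  have "ennreal c * emeasure lborel {x. c < f x} = (\<integral>\<^sup>+x. ennreal c * indicator {x. c < f x} x \<partial>lborel)"
    by (simp add: nn_integral_cmult_indicator)
  also have "\<dots> \<le> (\<integral>\<^sup>+x. f x \<partial>lborel)"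
    by (intro nn_integral_mono) (auto split: split_indicator intro: ennreal_leI)
  also have "\<dots> < \<infinity>"
    by (rule finite)
  finally show ?thesis
    using c by (auto simp: ennreal_mult_less_top top_unique)
qed

lemma less_powr_convex_combination:
  fixes a b c lam :: real
  assumes "0 < lam" "lam < 1" "0 < c" "c < a" "c < b"
  shows "c < a powr (1 - lam) * b powr lam"
proof -
  have "c = c powr (1 - lam) * c powr lam"
    using assms by (simp add: powr_add[symmetric])
  also have "\<dots> < a powr (1 - lam) * b powr lam"
    using assms by (intro mult_strict_mono powr_less_mono2) auto
  finally show ?thesis .
qed

lemma prekopa_leindler_normalized:
  fixes f g h :: "real \<Rightarrow> real" and lam :: real
  assumes lam: "0 < lam" "lam < 1"
    and measurable[measurable]: "f \<in> borel_measurable lborel" "g \<in> borel_measurable lborel"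
      "h \<in> borel_measurable lborel"
    and f: "\<And>x. 0 \<le> f x" "\<And>x. f x \<le> 1" "\<And>c. c < 1 \<Longrightarrow> \<exists>x. c < f x"
      "\<And>c. is_interval {x. c < f x}" "integrable lborel f"
    and g: "\<And>x. 0 \<le> g x" "\<And>x. g x \<le> 1" "\<And>c. c < 1 \<Longrightarrow> \<exists>x. c < g x"
      "\<And>c. is_interval {x. c < g x}" "integrable lborel g"
    and h: "\<And>x. 0 \<le> h x" "integrable lborel h"
    and combination: "\<And>s t. f s powr (1 - lam) * g t powr lam \<le> h ((1 - lam) * s + lam * t)"
  shows "(1 - lam) * integral\<^sup>L lborel f + lam * integral\<^sup>L lborel g \<le> integral\<^sup>L lborel h"
proof -
  define m where "m \<phi> c = emeasure lborel {x. c < \<phi> x}" for \<phi> :: "real \<Rightarrow> real" and c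
  have finite_level: "bounded {x. c < \<phi> x}"
    if "0 < c" "is_interval {x. c < \<phi> x}" "integrable lborel \<phi>" "\<And>x. 0 \<le> \<phi> x" for \<phi> :: "real \<Rightarrow> real" and c
  proof (rule bounded_interval_of_finite_measure[OF that(2)])
    have "(\<integral>\<^sup>+x. \<phi> x \<partial>lborel) < \<infinity>"
      using that(3,4) by (simp add: nn_integral_eq_integral)
    then show "emeasure lborel {x. c < \<phi> x} < \<infinity>"
      using that(1,3) by (intro emeasure_superlevel_finite) auto
  qed
  \<comment> \<open>Brunn-Minkowski on each superlevel set, integrated over the level by the layer-cake formula.\<close>
  have level: "ennreal (1 - lam) * m f c + ennreal lam * m g c \<le> m h c" if "0 < c" for c
  proof (cases "c < 1")
    case True
    show ?thesis
      unfolding m_def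
    proof (rule brunn_minkowski_interval)
      show "is_interval {x. c < f x}" "bounded {x. c < f x}" "{x. c < f x} \<noteq> {}"
        using f finite_level[OF that] True by auto
      show "is_interval {x. c < g x}" "bounded {x. c < g x}" "{x. c < g x} \<noteq> {}"
        using g finite_level[OF that] True by auto
      show "(1 - lam) * s + lam * t \<in> {x. c < h x}" if "s \<in> {x. c < f x}" "t \<in> {x. c < g x}" for s t
        using less_powr_convex_combination[OF lam \<open>0 < c\<close>] combination[of s t] that
        by (auto intro: less_le_trans)
    qed (use lam in auto)
  next
    case False
    then have "{x. c < f x} = {}" "{x. c < g x} = {}"
      using f(2) g(2) by (auto simp: not_less intro: order_trans)
    then show ?thesis
      unfolding m_def by simp
  qed
  have nn_integral: "(\<integral>\<^sup>+x. \<phi> x \<partial>lborel) = ennreal (integral\<^sup>L lborel \<phi>)"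
    if "integrable lborel \<phi>" "\<And>x. 0 \<le> \<phi> x" for \<phi> :: "real \<Rightarrow> real"
    using that by (intro nn_integral_eq_integral) auto
  have [measurable]: "m f \<in> borel_measurable lborel" "m g \<in> borel_measurable lborel"
    unfolding m_def by (simp_all add: borel_measurable_emeasure_superlevel)
  have "ennreal ((1 - lam) * integral\<^sup>L lborel f + lam * integral\<^sup>L lborel g)
      = ennreal (1 - lam) * (\<integral>\<^sup>+x. f x \<partial>lborel) + ennreal lam * (\<integral>\<^sup>+x. g x \<partial>lborel)"
    using lam f g by (simp add: nn_integral ennreal_plus ennreal_mult integral_nonneg_AE)
  also have "\<dots> = (\<integral>\<^sup>+c. (ennreal (1 - lam) * m f c + ennreal lam * m g c) * indicator {0<..} c \<partial>lborel)"
    unfolding m_def nn_integral_layer_cake[OF measurable(1) f(1)] nn_integral_layer_cake[OF measurable(2) g(1)]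
    by (simp add: nn_integral_add nn_integral_cmult distrib_right mult.assoc)
  also have "\<dots> \<le> (\<integral>\<^sup>+c. m h c * indicator {0<..} c \<partial>lborel)"
    using level by (intro nn_integral_mono) (simp split: split_indicator)
  also have "\<dots> = ennreal (integral\<^sup>L lborel h)"
    unfolding m_def nn_integral_layer_cake[OF measurable(3) h(1), symmetric] using h by (simp add: nn_integral)
  finally show ?thesis
    using h by (simp add: ennreal_le_iff integral_nonneg_AE)
qed

lemma divide_Sup_range:
  fixes f :: "'a \<Rightarrow> real"
  assumes bdd: "bdd_above (range f)" and pos: "0 < Sup (range f)"
  shows "f x / Sup (range f) \<le> 1"
    and "c < 1 \<Longrightarrow> \<exists>x. c < f x / Sup (range f)"
    and "{x. c < f x / Sup (range f)} = {x. c * Sup (range f) < f x}"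
proof -
  show "f x / Sup (range f) \<le> 1"
    using cSup_upper[OF rangeI bdd] pos by simp
  show "\<exists>x. c < f x / Sup (range f)" if "c < 1"
  proof -
    have "c * Sup (range f) < Sup (range f)"
      using that pos by simp
    then obtain x where "c * Sup (range f) < f x"
      using less_cSup_iff[OF _ bdd] by auto
    then show ?thesis
      using pos by (auto simp: field_simps)
  qed
  show "{x. c < f x / Sup (range f)} = {x. c * Sup (range f) < f x}"
    using pos by (simp add: field_simps)
qed

lemma Sup_range_pos_if_integral_nonzero:
  fixes f :: "real \<Rightarrow> real"
  assumes "\<And>x. 0 \<le> f x" "bdd_above (range f)" "integral\<^sup>L lborel f \<noteq> 0"
  shows "0 < Sup (range f)"
proof -
  have "f \<noteq> (\<lambda>_. 0)"
    using assms(3) by auto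
  then obtain x where "f x \<noteq> 0"
    unfolding fun_eq_iff by blast
  then have "0 < f x"
    using assms(1) by (simp add: order_less_le)
  then show ?thesis
    using cSup_upper[OF rangeI assms(2), of x] by linarith
qed

theorem prekopa_leindler_quasiconcave:
  fixes f g h :: "real \<Rightarrow> real" and lam :: real
  assumes lam: "0 < lam" "lam < 1"
    and [measurable]: "f \<in> borel_measurable lborel" "g \<in> borel_measurable lborel"
      "h \<in> borel_measurable lborel"
    and f: "\<And>x. 0 \<le> f x" "bdd_above (range f)" "\<And>c. is_interval {x. c < f x}"
      "integrable lborel f"
    and g: "\<And>x. 0 \<le> g x" "bdd_above (range g)" "\<And>c. is_interval {x. c < g x}"
      "integrable lborel g"
    and h: "\<And>x. 0 \<le> h x" "integrable lborel h"
    and combination: "\<And>s t. f s powr (1 - lam) * g t powr lam \<le> h ((1 - lam) * s + lam * t)"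
  shows "integral\<^sup>L lborel f powr (1 - lam) * integral\<^sup>L lborel g powr lam \<le> integral\<^sup>L lborel h"
proof (cases "integral\<^sup>L lborel f = 0 \<or> integral\<^sup>L lborel g = 0")
  case True
  then show ?thesis
    using h by (auto intro: integral_nonneg_AE)
next
  case False
  \<comment> \<open>Scaling \<open>f\<close> and \<open>g\<close> to supremum 1 gives the additive form; weighted AM-GM turns it back.\<close>
  define Mf Mg where "Mf = Sup (range f)" and "Mg = Sup (range g)"
  define K where "K = Mf powr (1 - lam) * Mg powr lam"
  have Mf: "0 < Mf" and Mg: "0 < Mg"
    unfolding Mf_def Mg_def using f g False by (auto intro: Sup_range_pos_if_integral_nonzero)
  then have K: "0 < K"
    unfolding K_def by simp
  note f_scaled = divide_Sup_range[OF f(2) Mf[unfolded Mf_def]]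
  note g_scaled = divide_Sup_range[OF g(2) Mg[unfolded Mg_def]]
  have "(1 - lam) * integral\<^sup>L lborel (\<lambda>x. f x / Mf) + lam * integral\<^sup>L lborel (\<lambda>x. g x / Mg)
      \<le> integral\<^sup>L lborel (\<lambda>x. h x / K)"
  proof (rule prekopa_leindler_normalized[OF lam])
    fix s t
    have "(f s / Mf) powr (1 - lam) * (g t / Mg) powr lam = f s powr (1 - lam) * g t powr lam / K"
      unfolding K_def using f(1) g(1) Mf Mg by (simp add: powr_divide)
    also have "\<dots> \<le> h ((1 - lam) * s + lam * t) / K"
      using combination K by (simp add: divide_right_mono)
    finally show "(f s / Mf) powr (1 - lam) * (g t / Mg) powr lam \<le> h ((1 - lam) * s + lam * t) / K" .
  qed (use f g h Mf Mg K f_scaled g_scaled in \<open>simp_all add: Mf_def Mg_def\<close>)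
  then have additive: "(1 - lam) * (integral\<^sup>L lborel f / Mf) + lam * (integral\<^sup>L lborel g / Mg)
      \<le> integral\<^sup>L lborel h / K"
    by simp
  have "0 < integral\<^sup>L lborel f / Mf" "0 < integral\<^sup>L lborel g / Mg"
    using False f g Mf Mg by (auto simp: order_less_le integral_nonneg_AE)
  then have "(integral\<^sup>L lborel f / Mf) powr (1 - lam) * (integral\<^sup>L lborel g / Mg) powr lam
      \<le> integral\<^sup>L lborel h / K"
    using Youngs_inequality_0[of "1 - lam" lam] lam additive by (smt (verit))
  moreover have "(integral\<^sup>L lborel f / Mf) powr (1 - lam) * (integral\<^sup>L lborel g / Mg) powr lam
      = integral\<^sup>L lborel f powr (1 - lam) * integral\<^sup>L lborel g powr lam / K"
    unfolding K_def using f g Mf Mg by (simp add: powr_divide integral_nonneg_AE)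
  ultimately show ?thesis
    using K by (simp add: divide_le_cancel)
qed

section \<open>Joint log-concavity of the integrand\<close>

lemma divide_exp_minus_one_antimono:
  fixes y z :: real
  assumes "0 < y" "y \<le> z"
  shows "z / (exp z - 1) \<le> y / (exp y - 1)"
proof -
  have "exp ((1 - y / z) * 0 + (y / z) * z) \<le> (1 - y / z) * exp 0 + (y / z) * exp z"
    using convex_onD[OF exp_convex, of "y / z" 0 z] assms by simp
  then have "z * exp y \<le> z * ((1 - y / z) + y / z * exp z)"
    using assms by (intro mult_left_mono) simp_all
  also have "\<dots> = z - y + y * exp z"
    using assms by (simp add: field_simps)
  finally have "z * (exp y - 1) \<le> y * (exp z - 1)"
    by (simp add: algebra_simps)
  moreover have "0 < exp y - 1" "0 < exp z - 1"
    using assms by auto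
  ultimately show ?thesis
    by (simp add: divide_simps mult.commute)
qed

definition ln_one_minus_exp_neg_exp :: "real \<Rightarrow> real" where
  "ln_one_minus_exp_neg_exp z = ln (1 - exp (- exp z))"

lemma ln_one_minus_exp_neg_exp_mono: "y \<le> z \<Longrightarrow> ln_one_minus_exp_neg_exp y \<le> ln_one_minus_exp_neg_exp z"
  unfolding ln_one_minus_exp_neg_exp_def by simp

lemma ln_one_minus_exp_neg_exp_concave: "concave_on UNIV ln_one_minus_exp_neg_exp"
  unfolding concave_on_def
proof (rule convex_on_realI[where f' = "\<lambda>z. - (exp z / (exp (exp z) - 1))"])
  show "((\<lambda>z. - ln_one_minus_exp_neg_exp z) has_real_derivative - (exp z / (exp (exp z) - 1))) (at z)"
    for z
  proof -
    have "(ln_one_minus_exp_neg_exp has_real_derivative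
        (- (exp (- exp z) * (- exp z))) / (1 - exp (- exp z))) (at z)"
      unfolding ln_one_minus_exp_neg_exp_def by (auto intro!: derivative_eq_intros)
    moreover have "(- (exp (- exp z) * (- exp z))) / (1 - exp (- exp z)) = exp z / (exp (exp z) - 1)"
      by (simp add: exp_minus field_simps)
    ultimately show ?thesis
      by (auto intro: derivative_intros)
  qed
  show "- (exp y / (exp (exp y) - 1)) \<le> - (exp z / (exp (exp z) - 1))" if "y \<le> z" for y z :: real
    using divide_exp_minus_one_antimono[of "exp y" "exp z"] that by simp
qed simp

lemma convex_ln_weight:
  assumes "finite B" "B \<noteq> {}"
  shows "convex_on UNIV (\<lambda>\<theta>::real^'d. ln (weight \<theta> B))"
proof (rule convex_onI)
  fix t :: real and x y :: "real^'d"
  assume "0 < t" "t < 1"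
  then have t: "0 \<le> t" "t \<le> 1"
    by simp_all
  define C where "C = (1 - t) * ln (weight x B) + t * ln (weight y B)"
  have pos: "0 < weight \<theta> B" for \<theta> :: "real^'d"
    using weight_pos[OF assms] .
  have "weight ((1 - t) *\<^sub>R x + t *\<^sub>R y) B / exp C
      = (\<Sum>j\<in>B. exp ((1 - t) * (x $ j - ln (weight x B)) + t * (y $ j - ln (weight y B))))"
    unfolding weight_def sum_divide_distrib
    by (intro sum.cong refl) (simp add: exp_diff[symmetric] C_def weight_def algebra_simps)
  also have "\<dots> \<le> (\<Sum>j\<in>B. (1 - t) * (exp (x $ j) / weight x B) + t * (exp (y $ j) / weight y B))"
  proof (rule sum_mono)
    fix j
    have "exp ((1 - t) * (x $ j - ln (weight x B)) + t * (y $ j - ln (weight y B)))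
        \<le> (1 - t) * exp (x $ j - ln (weight x B)) + t * exp (y $ j - ln (weight y B))"
      using convex_onD[OF exp_convex t] by simp
    then show "exp ((1 - t) * (x $ j - ln (weight x B)) + t * (y $ j - ln (weight y B)))
        \<le> (1 - t) * (exp (x $ j) / weight x B) + t * (exp (y $ j) / weight y B)"
      using pos by (simp add: exp_diff)
  qed
  also have "\<dots> = (1 - t) * (weight x B / weight x B) + t * (weight y B / weight y B)"
    unfolding weight_def
    by (simp only: sum.distrib sum_distrib_left[symmetric] sum_divide_distrib[symmetric]
        times_divide_eq_right)
  also have "\<dots> = 1"
    using pos[of x] pos[of y] by simp
  finally have "weight ((1 - t) *\<^sub>R x + t *\<^sub>R y) B \<le> exp C"
    by (simp add: divide_le_eq)
  then have "ln (weight ((1 - t) *\<^sub>R x + t *\<^sub>R y) B) \<le> ln (exp C)"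
    using pos by (subst ln_le_cancel_iff) auto
  then show "ln (weight ((1 - t) *\<^sub>R x + t *\<^sub>R y) B) \<le> C"
    by simp
qed simp

definition PL_log_density :: "real^'d \<Rightarrow> 'd set \<Rightarrow> 'd set \<Rightarrow> real \<Rightarrow> real" where
  "PL_log_density \<theta> B T s =
     s - exp s + (\<Sum>i\<in>T. ln_one_minus_exp_neg_exp (\<theta> $ i - ln (weight \<theta> B) + s))"

lemma PL_density_eq_exp:
  fixes \<theta> :: "real^'d"
  assumes B: "0 < weight \<theta> B" and T: "finite T"
  shows "PL_density \<theta> B T s = exp (PL_log_density \<theta> B T s)"
proof -
  have "exp (\<theta> $ i) / weight \<theta> B * exp s = exp (\<theta> $ i - ln (weight \<theta> B) + s)" for i
    using B by (simp add: exp_add exp_diff)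
  then have "1 - exp (- (exp (\<theta> $ i) / weight \<theta> B * exp s))
      = exp (ln_one_minus_exp_neg_exp (\<theta> $ i - ln (weight \<theta> B) + s))" for i
    unfolding ln_one_minus_exp_neg_exp_def by simp
  then show ?thesis
    unfolding PL_density_def PL_log_density_def by (simp add: exp_sum[OF T] exp_add exp_diff)
qed

lemma PL_log_density_concave:
  fixes x y :: "real^'d" and t s1 s2 :: real
  assumes B: "finite B" "B \<noteq> {}" and t: "0 \<le> t" "t \<le> 1"
  shows "(1 - t) * PL_log_density x B T s1 + t * PL_log_density y B T s2
    \<le> PL_log_density ((1 - t) *\<^sub>R x + t *\<^sub>R y) B T ((1 - t) * s1 + t * s2)"
proof -
  define z where "z = (1 - t) *\<^sub>R x + t *\<^sub>R y"
  define s where "s = (1 - t) * s1 + t * s2"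
  define arg where "arg \<theta> r i = \<theta> $ i - ln (weight \<theta> B) + r" for \<theta> :: "real^'d" and r i
  have "(1 - t) * (s1 - exp s1) + t * (s2 - exp s2) \<le> s - exp s"
    using convex_onD[OF exp_convex t, of s1 s2] unfolding s_def by (simp add: algebra_simps)
  moreover have "(1 - t) * ln_one_minus_exp_neg_exp (arg x s1 i)
      + t * ln_one_minus_exp_neg_exp (arg y s2 i) \<le> ln_one_minus_exp_neg_exp (arg z s i)" for i
  proof -
    have "(1 - t) * ln_one_minus_exp_neg_exp (arg x s1 i) + t * ln_one_minus_exp_neg_exp (arg y s2 i)
        \<le> ln_one_minus_exp_neg_exp ((1 - t) * arg x s1 i + t * arg y s2 i)"
      using concave_onD[OF ln_one_minus_exp_neg_exp_concave t] by simp
    also have "\<dots> \<le> ln_one_minus_exp_neg_exp (arg z s i)"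
      using convex_onD[OF convex_ln_weight[OF B] t, of x y]
      unfolding arg_def z_def s_def by (intro ln_one_minus_exp_neg_exp_mono) (simp add: algebra_simps)
    finally show ?thesis .
  qed
  ultimately have "(1 - t) * (s1 - exp s1) + t * (s2 - exp s2)
      + (\<Sum>i\<in>T. (1 - t) * ln_one_minus_exp_neg_exp (arg x s1 i)
        + t * ln_one_minus_exp_neg_exp (arg y s2 i))
      \<le> s - exp s + (\<Sum>i\<in>T. ln_one_minus_exp_neg_exp (arg z s i))"
    by (intro add_mono sum_mono)
  moreover have "(1 - t) * PL_log_density x B T s1 + t * PL_log_density y B T s2
      = (1 - t) * (s1 - exp s1) + t * (s2 - exp s2)
        + ((1 - t) * (\<Sum>i\<in>T. ln_one_minus_exp_neg_exp (arg x s1 i))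
          + t * (\<Sum>i\<in>T. ln_one_minus_exp_neg_exp (arg y s2 i)))"
    unfolding PL_log_density_def arg_def by (simp add: algebra_simps)
  ultimately show ?thesis
    unfolding sum_distrib_left sum.distrib[symmetric]
    by (simp add: PL_log_density_def arg_def z_def s_def)
qed

lemma PL_density_log_concave:
  fixes x y :: "real^'d" and t s1 s2 :: real
  assumes B: "finite B" "B \<noteq> {}" and T: "finite T" and t: "0 \<le> t" "t \<le> 1"
  shows "PL_density x B T s1 powr (1 - t) * PL_density y B T s2 powr t
    \<le> PL_density ((1 - t) *\<^sub>R x + t *\<^sub>R y) B T ((1 - t) * s1 + t * s2)"
  using PL_log_density_concave[OF B t, of x T s1 y s2]
  unfolding PL_density_eq_exp[OF weight_pos[OF B] T] by (simp add: powr_def exp_add[symmetric])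

lemma PL_density_pos: "finite B \<Longrightarrow> B \<noteq> {} \<Longrightarrow> finite T \<Longrightarrow> 0 < PL_density \<theta> B T s"
  by (simp add: PL_density_eq_exp weight_pos)

lemma PL_density_le_one:
  fixes \<theta> :: "real^'d"
  shows "PL_density \<theta> B T s \<le> 1"
proof -
  have "s - exp s \<le> 0"
    using exp_ge_add_one_self[of s] by linarith
  then have "exp (s - exp s) \<le> 1"
    by simp
  moreover have "0 \<le> 1 - exp (- (exp (\<theta> $ i) / weight \<theta> B * exp s))"
    and "1 - exp (- (exp (\<theta> $ i) / weight \<theta> B * exp s)) \<le> 1" for i
    using weight_nonneg[of \<theta> B] by simp_all
  ultimately show ?thesis
    unfolding PL_density_def by (intro mult_le_one prod_le_1 prod_nonneg) auto
qed

lemma is_interval_superlevel_log_concave: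
  fixes \<phi> :: "real \<Rightarrow> real"
  assumes pos: "\<And>x. 0 < \<phi> x"
    and log_concave: "\<And>s t \<mu>. 0 \<le> \<mu> \<Longrightarrow> \<mu> \<le> 1 \<Longrightarrow>
      \<phi> s powr (1 - \<mu>) * \<phi> t powr \<mu> \<le> \<phi> ((1 - \<mu>) * s + \<mu> * t)"
  shows "is_interval {x. c < \<phi> x}"
  unfolding is_interval_1
proof (intro ballI allI impI)
  fix s t x assume s: "s \<in> {x. c < \<phi> x}" and t: "t \<in> {x. c < \<phi> x}" and x: "s \<le> x \<and> x \<le> t"
  show "x \<in> {x. c < \<phi> x}"
  proof (cases "s = t")
    case True
    then have "x = s"
      using x by linarith
    then show ?thesis
      using s by simp
  next
    case False
    define \<mu> where "\<mu> = (x - s) / (t - s)"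
    have "s < t"
      using x False by linarith
    then have "\<mu> * (t - s) = x - s"
      unfolding \<mu>_def by simp
    moreover have "(1 - \<mu>) * s + \<mu> * t = s + \<mu> * (t - s)"
      by (simp add: algebra_simps)
    moreover have "0 \<le> \<mu>" "\<mu> \<le> 1"
      using x \<open>s < t\<close> unfolding \<mu>_def by (simp_all add: field_simps)
    ultimately have \<mu>: "0 \<le> \<mu>" "\<mu> \<le> 1" "(1 - \<mu>) * s + \<mu> * t = x"
      by simp_all
    define m where "m = min (\<phi> s) (\<phi> t)"
    have "c < m"
      using s t unfolding m_def by simp
    also have "m = m powr (1 - \<mu>) * m powr \<mu>"
      using pos[of s] pos[of t] unfolding m_def by (simp add: powr_add[symmetric])
    also have "\<dots> \<le> \<phi> s powr (1 - \<mu>) * \<phi> t powr \<mu>"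
      using pos[of s] pos[of t] \<mu> unfolding m_def by (intro mult_mono powr_mono2) auto
    also have "\<dots> \<le> \<phi> x"
      using log_concave[OF \<mu>(1,2), of s t] \<mu>(3) by simp
    finally show ?thesis
      by simp
  qed
qed

section \<open>Concavity of the log-likelihood\<close>

lemma PL_before_pos:
  fixes \<theta> :: "real^'d"
  assumes "finite B" "B \<noteq> {}" "finite T"
  shows "0 < PL_before \<theta> B T"
  unfolding PL_before_def
proof (rule sum_pos)
  fix \<sigma> :: "'d list"
  have "0 < (\<Sum>c\<in>{u..<length \<sigma>}. exp (\<theta> $ (\<sigma> ! c))) + (\<Sum>i\<in>B. exp (\<theta> $ i))" for u
    using weight_pos[OF assms(1,2), of \<theta>] unfolding weight_def
    by (intro add_nonneg_pos sum_nonneg) auto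
  then show "0 < (\<Prod>u<length \<sigma>. exp (\<theta> $ (\<sigma> ! u)) /
      ((\<Sum>c\<in>{u..<length \<sigma>}. exp (\<theta> $ (\<sigma> ! c))) + (\<Sum>i\<in>B. exp (\<theta> $ i))))"
    by (intro prod_pos divide_pos_pos) auto
qed (use assms(3) in simp_all)

lemma PL_before_log_concave:
  fixes x y :: "real^'d" and t :: real
  assumes B: "finite B" "B \<noteq> {}" and T: "finite T" and t: "0 < t" "t < 1"
  shows "PL_before x B T powr (1 - t) * PL_before y B T powr t
    \<le> PL_before ((1 - t) *\<^sub>R x + t *\<^sub>R y) B T"
proof -
  note pos = PL_density_pos[OF B T] and weight = weight_pos[OF B]
  have superlevel: "is_interval {s. c < PL_density \<theta> B T s}" for \<theta> :: "real^'d" and c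
  proof (rule is_interval_superlevel_log_concave)
    show "PL_density \<theta> B T s powr (1 - \<mu>) * PL_density \<theta> B T s' powr \<mu>
        \<le> PL_density \<theta> B T ((1 - \<mu>) * s + \<mu> * s')" if "0 \<le> \<mu>" "\<mu> \<le> 1" for s s' \<mu>
      using PL_density_log_concave[OF B T that, of \<theta> s \<theta> s']
      by (simp add: scaleR_left_distrib[symmetric])
  qed (rule pos)
  have nonneg: "0 \<le> PL_density \<theta> B T s" for \<theta> :: "real^'d" and s
    using pos less_imp_le by blast
  have bdd: "bdd_above (range (PL_density \<theta> B T))" for \<theta> :: "real^'d"
    using PL_density_le_one by (intro bdd_aboveI2) auto
  have "integral\<^sup>L lborel (PL_density x B T) powr (1 - t) * integral\<^sup>L lborel (PL_density y B T) powr t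
      \<le> integral\<^sup>L lborel (PL_density ((1 - t) *\<^sub>R x + t *\<^sub>R y) B T)"
  proof (rule prekopa_leindler_quasiconcave[OF t])
    show "PL_density \<theta> B T \<in> borel_measurable lborel" for \<theta> :: "real^'d"
      unfolding PL_density_def by measurable
    show "PL_density x B T s powr (1 - t) * PL_density y B T s' powr t
        \<le> PL_density ((1 - t) *\<^sub>R x + t *\<^sub>R y) B T ((1 - t) * s + t * s')" for s s'
      using PL_density_log_concave[OF B T] t by simp
  qed (use nonneg bdd superlevel integrable_PL_density[OF T weight] in simp_all)
  then show ?thesis
    by (simp add: integral_PL_density[OF T weight])
qed

lemma concave_ln_PL_before:
  assumes "finite B" "B \<noteq> {}" "finite T"
  shows "concave_on UNIV (\<lambda>\<theta>::real^'d. ln (PL_before \<theta> B T))"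
  unfolding concave_on_def
proof (rule convex_onI)
  fix t :: real and x y :: "real^'d"
  assume t: "0 < t" "t < 1"
  note pos = PL_before_pos[OF assms]
  have "(1 - t) * ln (PL_before x B T) + t * ln (PL_before y B T)
      = ln (PL_before x B T powr (1 - t) * PL_before y B T powr t)"
    using pos[of x] pos[of y] by (simp add: ln_mult ln_powr)
  also have "\<dots> \<le> ln (PL_before ((1 - t) *\<^sub>R x + t *\<^sub>R y) B T)"
    using PL_before_log_concave[OF assms t, of x y] pos[of x] pos[of y] pos[of "(1 - t) *\<^sub>R x + t *\<^sub>R y"]
    by simp
  finally show "- ln (PL_before ((1 - t) *\<^sub>R x + t *\<^sub>R y) B T)
      \<le> (1 - t) * - ln (PL_before x B T) + t * - ln (PL_before y B T)"
    by simp
qed simp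

lemma concave_on_sum_functions:
  assumes "finite I" "convex S" "\<And>i. i \<in> I \<Longrightarrow> concave_on S (f i)"
  shows "concave_on S (\<lambda>x. \<Sum>i\<in>I. f i x)"
  using assms by (induction I rule: finite_induct) (auto intro: concave_on_add simp: concave_on_const)

theorem mainTheorem3:
  fixes T B :: "'d::finite set"
    and n :: nat and ell :: "nat \<Rightarrow> nat" and e :: "nat \<Rightarrow> nat \<Rightarrow> 'd set \<times> 'd set"
  assumes "T \<noteq> {}" and "B \<noteq> {}" and "T \<inter> B = {}"
    and "\<And>j a. j \<in> {1..n} \<Longrightarrow> a \<in> {1..ell j} \<Longrightarrow>
           fst (e j a) \<noteq> {} \<and> snd (e j a) \<noteq> {} \<and> fst (e j a) \<inter> snd (e j a) = {}"
  shows "concave_on UNIV (\<lambda>\<theta>::real^'d. ln (PL_before \<theta> B T))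
       \<and> concave_on UNIV (L_RB n ell e)"
proof
  show "concave_on UNIV (\<lambda>\<theta>::real^'d. ln (PL_before \<theta> B T))"
    using assms(2) by (intro concave_ln_PL_before) simp_all
  have "concave_on UNIV (\<lambda>\<theta>::real^'d. ln (PL_edge \<theta> (e j a)))"
    if "j \<in> {1..n}" "a \<in> {1..ell j}" for j a
    unfolding PL_edge_def using assms(4)[OF that] by (intro concave_ln_PL_before) simp_all
  then show "concave_on UNIV (L_RB n ell e)"
    unfolding L_RB_def[abs_def] by (intro concave_on_sum_functions) simp_all
qed

end
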